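(* Let $F\in\ell^2(\mathbb Z)$ be supported in $[0,\infty)$. Define $(a_0,b_0)=(1+|F_0|^2)^{-1/2}(1,F_0)$ and, for $k>0$, $(a_k(z),b_k(z))=(a_{k-1}(z),b_{k-1}(z))\,(1+|F_k|^2)^{-1/2}(1,F_kz^k)$. Then $(a_k,b_k)$ converges in $(\mathbf L,\rho)$ to an element $(a,b)\in\overline{\mathbf H}$, and $$a(\infty)=\prod_{n\ge0}(1+|F_n|^2)^{-1/2}.$$
   Context: $\mathbb T$ is the unit circle, $\mathbb D$ the open unit disc, $\mathbb D^*=\{\overline z^{-1}:z\in\mathbb D\}$, $a^*(z)=\overline{a(\overline z^{-1})}$ (so $a^*=\overline a$ on $\mathbb T$), $\int_{\mathbb T}a=\int_0^1a(e^{2\pi i\theta})d\theta$. $H^2(\mathbb D)$ is the space of $f\in L^2(\mathbb T)$ with vanishing negative Fourier coefficients; $H^2(\mathbb D^* )$ the space of $f$ with $f^*\in H^2(\mathbb D)$; for such $f$, $f(\infty):=\overline{f^*(0)}=\int_{\mathbb T}f$. Pairs multiply as $(a,b)(c,d)=(ac-bd^*,ad+bc^* )$, where a constant $y$ satisfies $y^*=\overline y$ and $z\mapsto z^k$ satisfies $(z^k)^*=z^{-k}$. $\mathbf L$ is the set of pairs $(a,b)$ of measurable functions on $\mathbb T$ with $aa^*+bb^*=1$ a.e., $a\in H^2(\mathbb D^* )$, $a(\infty)>0$, with metric $\rho((a,b),(c,d))=\|a-c\|_{L^2(\mathbb T)}+\|b-d\|_{L^2(\mathbb T)}+|\log a(\infty)-\log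 c(\infty)|$. $\overline{\mathbf H}$ is the set of $(a,b)\in\mathbf L$ with $b\in H^2(\mathbb D)$. *)

theory Defs
  imports "HOL-Analysis.Analysis"
begin

text \<open>Functions on the unit circle T are represented through the parametrisation
  theta in [0,1] |-> exp(2 pi i theta); i.e. a function a on T is represented by
  the function (real => complex) theta |-> a(exp(2 pi i theta)).  The normalised
  measure on T becomes Lebesgue measure on [0,1].\<close>

abbreviation circ_meas :: "real measure" where
  "circ_meas \<equiv> lebesgue_on {0..1}"

definition circ_int :: "(real \<Rightarrow> complex) \<Rightarrow> complex" where
  "circ_int f = integral\<^sup>L circ_meas f"

definition fourier_coeff :: "(real \<Rightarrow> complex) \<Rightarrow> int \<Rightarrow> complex" where
  "fourier_coeff f n = circ_int (\<lambda>\<theta>. f \<theta> * cis (- 2 * pi * of_int n * \<theta>))"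

definition in_L2 :: "(real \<Rightarrow> complex) \<Rightarrow> bool" where
  "in_L2 f \<longleftrightarrow> f \<in> borel_measurable circ_meas \<and>
     integrable circ_meas (\<lambda>\<theta>. (cmod (f \<theta>))\<^sup>2)"

definition L2_norm :: "(real \<Rightarrow> complex) \<Rightarrow> real" where
  "L2_norm f = sqrt (integral\<^sup>L circ_meas (\<lambda>\<theta>. (cmod (f \<theta>))\<^sup>2))"

definition H2_D :: "(real \<Rightarrow> complex) \<Rightarrow> bool" where
  "H2_D f \<longleftrightarrow> in_L2 f \<and> (\<forall>n<0. fourier_coeff f n = 0)"

text \<open>H^2(D^*): f with f^* in H^2(D); on T, f^* is the complex conjugate of f.\<close>
definition H2_Dstar :: "(real \<Rightarrow> complex) \<Rightarrow> bool" where
  "H2_Dstar f \<longleftrightarrow> H2_D (\<lambda>\<theta>. cnj (f \<theta>))"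

text \<open>For f in H^2(D^*), f(infinity) = integral of f over T.\<close>
definition at_infty :: "(real \<Rightarrow> complex) \<Rightarrow> complex" where
  "at_infty f = circ_int f"

type_synonym circ_pair = "(real \<Rightarrow> complex) \<times> (real \<Rightarrow> complex)"

definition in_Lspace :: "circ_pair \<Rightarrow> bool" where
  "in_Lspace p \<longleftrightarrow> (case p of (a, b) \<Rightarrow>
     a \<in> borel_measurable circ_meas \<and> b \<in> borel_measurable circ_meas \<and>
     (AE \<theta> in circ_meas. a \<theta> * cnj (a \<theta>) + b \<theta> * cnj (b \<theta>) = 1) \<and>
     H2_Dstar a \<and> at_infty a \<in> \<real> \<and> Re (at_infty a) > 0)"

definition in_Hbar :: "circ_pair \<Rightarrow> bool" where
  "in_Hbar p \<longleftrightarrow> in_Lspace p \<and> H2_D (snd p)"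

definition rho :: "circ_pair \<Rightarrow> circ_pair \<Rightarrow> real" where
  "rho p q = L2_norm (\<lambda>\<theta>. fst p \<theta> - fst q \<theta>) + L2_norm (\<lambda>\<theta>. snd p \<theta> - snd q \<theta>)
     + \<bar>ln (Re (at_infty (fst p))) - ln (Re (at_infty (fst q)))\<bar>"

text \<open>Pair product (a,b)(c,d) = (a c - b d^*, a d + b c^*), evaluated on T where g^* = conj g.\<close>
definition pair_mult :: "circ_pair \<Rightarrow> circ_pair \<Rightarrow> circ_pair" where
  "pair_mult p q = (\<lambda>\<theta>. fst p \<theta> * fst q \<theta> - snd p \<theta> * cnj (snd q \<theta>),
                    \<lambda>\<theta>. fst p \<theta> * snd q \<theta> + snd p \<theta> * cnj (fst q \<theta>))"

definition layer_const :: "(int \<Rightarrow> complex) \<Rightarrow> nat \<Rightarrow> real" where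
  "layer_const F k = 1 / sqrt (1 + (cmod (F (int k)))\<^sup>2)"

definition layer :: "(int \<Rightarrow> complex) \<Rightarrow> nat \<Rightarrow> circ_pair" where
  "layer F k = (\<lambda>\<theta>. complex_of_real (layer_const F k),
                \<lambda>\<theta>. complex_of_real (layer_const F k) * F (int k) * cis (2 * pi * real k * \<theta>))"

primrec nlft_partial :: "(int \<Rightarrow> complex) \<Rightarrow> nat \<Rightarrow> circ_pair" where
  "nlft_partial F 0 = layer F 0"
| "nlft_partial F (Suc k) = pair_mult (nlft_partial F k) (layer F (Suc k))"

end

theory Submission
  imports Defs "HOL-Probability.Probability_Measure"
begin

text \<open>Every layer (c_k, c_k F_k z^k), c_k = (1 + |F_k|^2)^(-1/2), satisfies |a|^2 + |b|^2 = 1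
  on the circle, and the pair product preserves this identity, so all partial products (a_k, b_k)
  are unitary pointwise.  Moreover a_k is a trigonometric polynomial with frequencies in [-k, 0],
  b_k one with frequencies in [0, k], and the mean of a_k is c_0 \<cdots> c_k.  Writing
  (a_(k+d), b_(k+d)) = (a_k, b_k) (e, f) with (e, f) the product of the layers k+1, ..., k+d,
  unitarity turns |a_(k+d) - a_k|^2 + |b_(k+d) - b_k|^2 into 2 - 2 Re e, whose mean is
  2 - 2 c_(k+1) \<cdots> c_(k+d).  Since the F_n are square summable, the product of the c_n
  converges to a positive limit, so the partial products form a Cauchy sequence in L^2.
  A subsequence converges almost everywhere, and by dominated convergence the limit is again
  unitary, keeps the one-sided Fourier supports, and has mean equal to the infinite product.\<close>

lemma borel_measurable_circ_meas_continuous: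
  "continuous_on {0..1} f \<Longrightarrow> f \<in> borel_measurable circ_meas"
  by (rule continuous_imp_measurable_on_sets_lebesgue) auto

lemma measure_circ_meas_space [simp]: "measure circ_meas {0..1} = 1"
  by (simp add: measure_restrict_space)

lemma finite_measure_circ_meas: "finite_measure circ_meas"
  by (rule finite_measure_lebesgue_on) simp

lemma prob_space_circ_meas: "prob_space circ_meas"
  by (rule prob_spaceI) (simp add: emeasure_restrict_space)

lemma integrable_circ_meas_bounded:
  fixes f :: "real \<Rightarrow> 'b::{banach, second_countable_topology}"
  assumes "f \<in> borel_measurable circ_meas" "\<And>\<theta>. norm (f \<theta>) \<le> K"
  shows "integrable circ_meas f"
  by (rule finite_measure.integrable_const_bound[OF finite_measure_circ_meas, where B = K])
    (use assms in auto)

lemma in_L2_bounded: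
  assumes "f \<in> borel_measurable circ_meas" "\<And>\<theta>. cmod (f \<theta>) \<le> K"
  shows "in_L2 f"
  unfolding in_L2_def
proof
  have "(cmod (f \<theta>))\<^sup>2 \<le> K\<^sup>2" for \<theta>
    using assms(2)[of \<theta>] by (intro power_mono) auto
  then show "integrable circ_meas (\<lambda>\<theta>. (cmod (f \<theta>))\<^sup>2)"
    by (intro integrable_circ_meas_bounded[where K = "K\<^sup>2"]) (use assms(1) in auto)
qed (fact assms(1))

lemma L2_norm_le_sqrt_integral:
  assumes "f \<in> borel_measurable circ_meas" "integrable circ_meas g" "\<And>\<theta>. (cmod (f \<theta>))\<^sup>2 \<le> g \<theta>"
  shows "L2_norm f \<le> sqrt (LINT \<theta>|circ_meas. g \<theta>)"
proof -
  have "integrable circ_meas (\<lambda>\<theta>. (cmod (f \<theta>))\<^sup>2)"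
    by (rule Bochner_Integration.integrable_bound[OF assms(2)])
      (use assms in \<open>auto intro!: AE_I2 order_trans[OF _ abs_ge_self]\<close>)
  then show ?thesis
    unfolding L2_norm_def using assms(2,3) by (intro real_sqrt_le_mono integral_mono)
qed

lemma L2_norm_components_le:
  fixes g L :: "real \<Rightarrow> complex \<times> complex"
  assumes g_meas: "g \<in> borel_measurable circ_meas" and L_meas: "L \<in> borel_measurable circ_meas"
    and "\<And>\<theta>. norm (g \<theta>) \<le> 1" "\<And>\<theta>. norm (L \<theta>) \<le> 1"
  shows "L2_norm (\<lambda>\<theta>. fst (g \<theta>) - fst (L \<theta>)) \<le> sqrt (LINT \<theta>|circ_meas. (norm (g \<theta> - L \<theta>))\<^sup>2)"
    "L2_norm (\<lambda>\<theta>. snd (g \<theta>) - snd (L \<theta>)) \<le> sqrt (LINT \<theta>|circ_meas. (norm (g \<theta> - L \<theta>))\<^sup>2)"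
proof -
  have norm_sq: "(norm (g \<theta> - L \<theta>))\<^sup>2 = (cmod (fst (g \<theta>) - fst (L \<theta>)))\<^sup>2 + (cmod (snd (g \<theta>) - snd (L \<theta>)))\<^sup>2"
    for \<theta> by (cases "g \<theta>"; cases "L \<theta>") (simp add: norm_Pair)
  have "norm (g \<theta> - L \<theta>) \<le> 2" for \<theta>
    using norm_triangle_ineq4[of "g \<theta>" "L \<theta>"] assms(3,4)[of \<theta>] by linarith
  then have "integrable circ_meas (\<lambda>\<theta>. (norm (g \<theta> - L \<theta>))\<^sup>2)"
    using power_mono[OF _ norm_ge_zero, of _ 2 2]
    by (intro integrable_circ_meas_bounded[where K = "2\<^sup>2"] borel_measurable_power
        measurable_compose[OF borel_measurable_diff borel_measurable_norm] g_meas L_meas) auto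
  moreover have "(\<lambda>\<theta>. fst (g \<theta>) - fst (L \<theta>)) \<in> borel_measurable circ_meas"
    "(\<lambda>\<theta>. snd (g \<theta>) - snd (L \<theta>)) \<in> borel_measurable circ_meas"
    by (intro borel_measurable_diff borel_measurable_continuous_on[OF _ g_meas]
        borel_measurable_continuous_on[OF _ L_meas] continuous_intros)+
  ultimately show "L2_norm (\<lambda>\<theta>. fst (g \<theta>) - fst (L \<theta>)) \<le> sqrt (LINT \<theta>|circ_meas. (norm (g \<theta> - L \<theta>))\<^sup>2)"
    "L2_norm (\<lambda>\<theta>. snd (g \<theta>) - snd (L \<theta>)) \<le> sqrt (LINT \<theta>|circ_meas. (norm (g \<theta> - L \<theta>))\<^sup>2)"
    by (intro L2_norm_le_sqrt_integral; simp add: norm_sq)+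
qed

lemma fourier_coeff_0: "fourier_coeff f 0 = circ_int f"
  by (simp add: fourier_coeff_def)

lemma circ_int_cis:
  "circ_int (\<lambda>\<theta>. cis (2 * pi * of_int n * \<theta>)) = (if n = 0 then 1 else 0)"
proof (cases "n = 0")
  case False
  define c where "c = 2 * pi * of_int n * \<i>"
  have "c \<noteq> 0" using False by (simp add: c_def)
  have cis_eq: "cis (2 * pi * of_int n * \<theta>) = exp (\<theta> *\<^sub>R c)" for \<theta>
    by (simp add: c_def cis_conv_exp scaleR_conv_of_real mult_ac)
  have "((\<lambda>\<theta>. exp (\<theta> *\<^sub>R c) / c) has_vector_derivative exp (\<theta> *\<^sub>R c))
          (at \<theta> within {0..1})" for \<theta>
    using exp_scaleR_has_vector_derivative_right[of c \<theta>, THEN has_vector_derivative_mult_left,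
        of "1 / c"] \<open>c \<noteq> 0\<close>
    by (simp add: field_simps)
  then have "((\<lambda>\<theta>. cis (2 * pi * of_int n * \<theta>)) has_integral (exp c / c - 1 / c)) {0..1}"
    unfolding cis_eq
    using fundamental_theorem_of_calculus[of 0 1 "\<lambda>\<theta>. exp (\<theta> *\<^sub>R c) / c"] by auto
  moreover have "exp c = 1"
    unfolding c_def by (simp add: exp_eq_1)
  moreover have "integrable circ_meas (\<lambda>\<theta>. cis (2 * pi * of_int n * \<theta>))"
    by (intro continuous_imp_integrable_real continuous_intros)
  ultimately show ?thesis
    using False unfolding circ_int_def by (simp add: lebesgue_integral_eq_integral integral_unique)
qed (simp add: circ_int_def)

lemma tendsto_fourier_coeff:
  assumes meas: "\<And>i. h i \<in> borel_measurable circ_meas" "f \<in> borel_measurable circ_meas"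
    and lim: "AE \<theta> in circ_meas. (\<lambda>i. h i \<theta>) \<longlonglongrightarrow> f \<theta>" and bound: "\<And>i \<theta>. cmod (h i \<theta>) \<le> K"
  shows "(\<lambda>i. fourier_coeff (h i) n) \<longlonglongrightarrow> fourier_coeff f n"
proof -
  have [measurable]: "(\<lambda>\<theta>. cis (- 2 * pi * of_int n * \<theta>)) \<in> borel_measurable circ_meas"
    by (intro borel_measurable_circ_meas_continuous continuous_intros)
  note meas [measurable]
  show ?thesis
    unfolding fourier_coeff_def circ_int_def
  proof (rule integral_dominated_convergence[where w = "\<lambda>_. K"])
    show "AE \<theta> in circ_meas. (\<lambda>i. h i \<theta> * cis (- 2 * pi * of_int n * \<theta>))
        \<longlonglongrightarrow> f \<theta> * cis (- 2 * pi * of_int n * \<theta>)"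
      using lim by eventually_elim (intro tendsto_intros)
    show "integrable circ_meas (\<lambda>_. K)"
      by (rule finite_measure.integrable_const[OF finite_measure_circ_meas])
    show "AE \<theta> in circ_meas. norm (h i \<theta> * cis (- 2 * pi * of_int n * \<theta>)) \<le> K" for i
      by (simp add: norm_mult bound)
  qed measurable
qed

lemma H2_D_AE_limit:
  assumes "\<And>i. H2_D (h i)" "\<And>i \<theta>. cmod (h i \<theta>) \<le> K"
    and "f \<in> borel_measurable circ_meas" "\<And>\<theta>. cmod (f \<theta>) \<le> K"
    and "AE \<theta> in circ_meas. (\<lambda>i. h i \<theta>) \<longlonglongrightarrow> f \<theta>"
  shows "H2_D f"
  unfolding H2_D_def
proof (intro conjI allI impI)
  show "in_L2 f"
    using assms(3,4) by (rule in_L2_bounded)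
  show "fourier_coeff f n = 0" if "n < 0" for n
  proof -
    have "(\<lambda>i. fourier_coeff (h i) n) \<longlonglongrightarrow> fourier_coeff f n"
      using assms by (intro tendsto_fourier_coeff) (auto simp: H2_D_def in_L2_def)
    moreover have "fourier_coeff (h i) n = 0" for i
      using assms(1) that by (simp add: H2_D_def)
    ultimately have "(\<lambda>i. 0) \<longlonglongrightarrow> fourier_coeff f n"
      by simp
    then show ?thesis
      by (simp add: LIMSEQ_const_iff)
  qed
qed

section \<open>Trigonometric polynomials\<close>

definition trig_poly :: "int \<Rightarrow> int \<Rightarrow> (real \<Rightarrow> complex) \<Rightarrow> bool" where
  "trig_poly lo hi f \<longleftrightarrow> (\<exists>c. f = (\<lambda>\<theta>. \<Sum>n\<in>{lo..hi}. c n * cis (2 * pi * of_int n * \<theta>)))"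

lemma trig_poly_zero: "trig_poly lo hi (\<lambda>_. 0)"
  unfolding trig_poly_def by (rule exI[of _ "\<lambda>_. 0"]) simp

lemma trig_poly_const: "trig_poly 0 0 (\<lambda>_. c)"
  unfolding trig_poly_def by (rule exI[of _ "\<lambda>_. c"]) simp

lemma trig_poly_mono:
  assumes "trig_poly lo hi f" "lo' \<le> lo" "hi \<le> hi'"
  shows "trig_poly lo' hi' f"
proof -
  obtain c where f: "f = (\<lambda>\<theta>. \<Sum>n\<in>{lo..hi}. c n * cis (2 * pi * of_int n * \<theta>))"
    using assms(1) unfolding trig_poly_def by blast
  define c' where "c' n = (if n \<in> {lo..hi} then c n else 0)" for n
  have "f \<theta> = (\<Sum>n\<in>{lo'..hi'}. c' n * cis (2 * pi * of_int n * \<theta>))" for \<theta>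
  proof -
    have "(\<Sum>n\<in>{lo'..hi'}. c' n * cis (2 * pi * of_int n * \<theta>))
        = (\<Sum>n\<in>{lo'..hi'}. if n \<in> {lo..hi} then c n * cis (2 * pi * of_int n * \<theta>) else 0)"
      unfolding c'_def by (rule sum.cong) auto
    also have "\<dots> = (\<Sum>n\<in>{lo'..hi'} \<inter> {lo..hi}. c n * cis (2 * pi * of_int n * \<theta>))"
      by (rule sum.inter_restrict[symmetric]) simp
    also have "{lo'..hi'} \<inter> {lo..hi} = {lo..hi}"
      using assms by auto
    finally show ?thesis by (simp add: f)
  qed
  then show ?thesis
    unfolding trig_poly_def by (intro exI[of _ c']) auto
qed

lemma trig_poly_add:
  assumes "trig_poly lo hi f" "trig_poly lo hi g"
  shows "trig_poly lo hi (\<lambda>\<theta>. f \<theta> + g \<theta>)"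
proof -
  obtain c d where "f = (\<lambda>\<theta>. \<Sum>n\<in>{lo..hi}. c n * cis (2 * pi * of_int n * \<theta>))"
    "g = (\<lambda>\<theta>. \<Sum>n\<in>{lo..hi}. d n * cis (2 * pi * of_int n * \<theta>))"
    using assms unfolding trig_poly_def by blast
  then show ?thesis unfolding trig_poly_def
    by (intro exI[of _ "\<lambda>n. c n + d n"]) (simp add: distrib_right sum.distrib)
qed

lemma trig_poly_cmult:
  assumes "trig_poly lo hi f"
  shows "trig_poly lo hi (\<lambda>\<theta>. k * f \<theta>)"
proof -
  obtain c where "f = (\<lambda>\<theta>. \<Sum>n\<in>{lo..hi}. c n * cis (2 * pi * of_int n * \<theta>))"
    using assms unfolding trig_poly_def by blast
  then show ?thesis unfolding trig_poly_def
    by (intro exI[of _ "\<lambda>n. k * c n"]) (simp add: sum_distrib_left mult.assoc)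
qed

lemma trig_poly_diff:
  assumes "trig_poly lo hi f" "trig_poly lo hi g"
  shows "trig_poly lo hi (\<lambda>\<theta>. f \<theta> - g \<theta>)"
  using trig_poly_add[OF assms(1) trig_poly_cmult[OF assms(2), of "-1"]] by simp

lemma trig_poly_mult_cis:
  assumes "trig_poly lo hi f"
  shows "trig_poly (lo + j) (hi + j) (\<lambda>\<theta>. f \<theta> * cis (2 * pi * of_int j * \<theta>))"
proof -
  obtain c where f: "f = (\<lambda>\<theta>. \<Sum>n\<in>{lo..hi}. c n * cis (2 * pi * of_int n * \<theta>))"
    using assms unfolding trig_poly_def by blast
  have "f \<theta> * cis (2 * pi * of_int j * \<theta>) = (\<Sum>n\<in>{lo..hi}. c n * cis (2 * pi * of_int (n + j) * \<theta>))"
    for \<theta> by (simp add: f sum_distrib_right mult.assoc cis_mult distrib_right distrib_left)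
  also have "\<dots> \<theta> = (\<Sum>n\<in>{lo+j..hi+j}. c (n - j) * cis (2 * pi * of_int n * \<theta>))" for \<theta>
    by (rule sum.reindex_bij_witness[of _ "\<lambda>n. n - j" "\<lambda>n. n + j"]) auto
  finally show ?thesis
    unfolding trig_poly_def by (intro exI[of _ "\<lambda>n. c (n - j)"]) auto
qed

lemma trig_poly_cnj:
  assumes "trig_poly lo hi f"
  shows "trig_poly (- hi) (- lo) (\<lambda>\<theta>. cnj (f \<theta>))"
proof -
  obtain c where f: "f = (\<lambda>\<theta>. \<Sum>n\<in>{lo..hi}. c n * cis (2 * pi * of_int n * \<theta>))"
    using assms unfolding trig_poly_def by blast
  have "cnj (f \<theta>) = (\<Sum>n\<in>{lo..hi}. cnj (c n) * cis (2 * pi * of_int (- n) * \<theta>))" for \<theta>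
    by (simp add: f cis_cnj)
  also have "\<dots> \<theta> = (\<Sum>n\<in>{-hi..-lo}. cnj (c (- n)) * cis (2 * pi * of_int n * \<theta>))" for \<theta>
    by (rule sum.reindex_bij_witness[of _ "\<lambda>n. - n" "\<lambda>n. - n"]) auto
  finally show ?thesis
    unfolding trig_poly_def by (intro exI[of _ "\<lambda>n. cnj (c (- n))"]) auto
qed

lemma continuous_on_trig_poly: "trig_poly lo hi f \<Longrightarrow> continuous_on A f"
  unfolding trig_poly_def by (auto intro!: continuous_intros)

lemma fourier_coeff_trig_poly:
  assumes "trig_poly lo hi f" "n \<notin> {lo..hi}"
  shows "fourier_coeff f n = 0"
proof -
  obtain c where f: "f = (\<lambda>\<theta>. \<Sum>m\<in>{lo..hi}. c m * cis (2 * pi * of_int m * \<theta>))"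
    using assms(1) unfolding trig_poly_def by blast
  have "fourier_coeff f n = circ_int (\<lambda>\<theta>. \<Sum>m\<in>{lo..hi}. c m * cis (2 * pi * of_int (m - n) * \<theta>))"
    unfolding fourier_coeff_def f
    by (simp add: sum_distrib_right mult.assoc cis_mult) (simp add: algebra_simps)
  also have "\<dots> = (\<Sum>m\<in>{lo..hi}. c m * circ_int (\<lambda>\<theta>. cis (2 * pi * of_int (m - n) * \<theta>)))"
    unfolding circ_int_def
    by (subst Bochner_Integration.integral_sum)
      (auto intro!: continuous_imp_integrable_real continuous_intros)
  also have "\<dots> = 0"
    using assms(2) by (intro sum.neutral ballI) (subst circ_int_cis, auto)
  finally show ?thesis .
qed

lemma H2_D_trig_poly:
  assumes "trig_poly lo hi f" "0 \<le> lo"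
  shows "H2_D f"
  unfolding H2_D_def
proof (intro conjI allI impI)
  show "in_L2 f"
    unfolding in_L2_def using continuous_on_trig_poly[OF assms(1)]
    by (auto intro!: borel_measurable_circ_meas_continuous continuous_imp_integrable_real
        continuous_intros)
  show "fourier_coeff f n = 0" if "n < 0" for n
    using fourier_coeff_trig_poly[OF assms(1)] that assms(2) by simp
qed

section \<open>Unitary pairs\<close>

lemma complex_mult_cnj_add_eq_1:
  assumes "(cmod a)\<^sup>2 + (cmod b)\<^sup>2 = 1"
  shows "a * cnj a + b * cnj b = 1"
proof -
  have "complex_of_real ((cmod a)\<^sup>2 + (cmod b)\<^sup>2) = 1"
    using assms by simp
  then show ?thesis
    by (simp only: of_real_add complex_norm_square)
qed

lemma cmod_pair_mult_sq:
  fixes a b c d :: complex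
  shows "(cmod (a * c - b * cnj d))\<^sup>2 + (cmod (a * d + b * cnj c))\<^sup>2
       = ((cmod a)\<^sup>2 + (cmod b)\<^sup>2) * ((cmod c)\<^sup>2 + (cmod d)\<^sup>2)"
  unfolding cmod_power2 by (simp add: power2_eq_square algebra_simps)

lemma cmod_pair_mult_diff_sq:
  fixes a b e f :: complex
  assumes "(cmod a)\<^sup>2 + (cmod b)\<^sup>2 = 1" "(cmod e)\<^sup>2 + (cmod f)\<^sup>2 = 1"
  shows "(cmod (a * e - b * cnj f - a))\<^sup>2 + (cmod (a * f + b * cnj e - b))\<^sup>2 = 2 - 2 * Re e"
proof -
  have "(cmod (a * e - b * cnj f - a))\<^sup>2 + (cmod (a * f + b * cnj e - b))\<^sup>2
      = (cmod (a * (e - 1) - b * cnj f))\<^sup>2 + (cmod (a * f + b * cnj (e - 1)))\<^sup>2"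
    by (simp add: algebra_simps)
  also have "\<dots> = (cmod (e - 1))\<^sup>2 + (cmod f)\<^sup>2"
    using cmod_pair_mult_sq[of a "e - 1" b f] assms(1) by simp
  also have "\<dots> = ((cmod e)\<^sup>2 + (cmod f)\<^sup>2) + 1 - 2 * Re e"
    unfolding cmod_power2 by (simp add: power2_eq_square algebra_simps)
  finally show ?thesis
    using assms(2) by simp
qed

lemma pair_mult_assoc: "pair_mult (pair_mult p q) r = pair_mult p (pair_mult q r)"
  unfolding pair_mult_def by (auto simp: algebra_simps fun_eq_iff)

lemma pair_mult_one_right: "pair_mult p (\<lambda>_. 1, \<lambda>_. 0) = p"
  by (simp add: pair_mult_def)

definition unitary_pair :: "circ_pair \<Rightarrow> bool" where
  "unitary_pair p \<longleftrightarrow> (\<forall>\<theta>. (cmod (fst p \<theta>))\<^sup>2 + (cmod (snd p \<theta>))\<^sup>2 = 1)"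

lemma unitary_pair_mult: "unitary_pair p \<Longrightarrow> unitary_pair q \<Longrightarrow> unitary_pair (pair_mult p q)"
  unfolding unitary_pair_def pair_mult_def by (simp add: cmod_pair_mult_sq)

lemma unitary_pair_D:
  assumes "unitary_pair p"
  shows "cmod (fst p \<theta>) \<le> 1" "cmod (snd p \<theta>) \<le> 1"
    "fst p \<theta> * cnj (fst p \<theta>) + snd p \<theta> * cnj (snd p \<theta>) = 1"
proof -
  have sq: "(cmod (fst p \<theta>))\<^sup>2 + (cmod (snd p \<theta>))\<^sup>2 = 1"
    using assms unfolding unitary_pair_def by blast
  then have "(cmod (fst p \<theta>))\<^sup>2 \<le> 1" "(cmod (snd p \<theta>))\<^sup>2 \<le> 1"
    by (smt (verit) zero_le_power2)+
  then show "cmod (fst p \<theta>) \<le> 1" "cmod (snd p \<theta>) \<le> 1"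
    by (simp_all add: abs_square_le_1)
  from sq show "fst p \<theta> * cnj (fst p \<theta>) + snd p \<theta> * cnj (snd p \<theta>) = 1"
    by (rule complex_mult_cnj_add_eq_1)
qed

lemma layer_const_pos: "layer_const F k > 0"
  unfolding layer_const_def by (simp add: add_pos_nonneg)

lemma layer_const_le_1: "layer_const F k \<le> 1"
  unfolding layer_const_def by (simp add: divide_le_eq_1 real_sqrt_ge_one add_pos_nonneg)

lemma unitary_pair_layer: "unitary_pair (layer F k)"
proof -
  have "0 < 1 + (cmod (F (int k)))\<^sup>2"
    by (simp add: add_pos_nonneg)
  then have "(layer_const F k)\<^sup>2 * (1 + (cmod (F (int k)))\<^sup>2) = 1"
    unfolding layer_const_def power_divide by simp
  then show ?thesis
    unfolding unitary_pair_def layer_def by (simp add: norm_mult power_mult_distrib algebra_simps)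
qed

text \<open>The lower frequency bound lo of the second component is 0 for the partial products and 1 for
  the tail products below.\<close>

lemma trig_poly_pair_mult_layer:
  fixes F :: "int \<Rightarrow> complex"
  assumes e': "trig_poly (- int m) 0 (fst q)" and f': "trig_poly lo (int m) (snd q)"
    and lo: "0 \<le> lo" "lo \<le> 1"
  defines "p \<equiv> pair_mult q (layer F (Suc m))"
  shows "trig_poly (- int (Suc m)) 0 (fst p)" "trig_poly lo (int (Suc m)) (snd p)"
    "circ_int (fst p) = layer_const F (Suc m) * circ_int (fst q)"
proof -
  define e f where "e = fst q" and "f = snd q"
  note e = e'[folded e_def] and f = f'[folded f_def]
  define C where "C = complex_of_real (layer_const F (Suc m))"
  define G where "G = F (int (Suc m))"
  define j where "j = int (Suc m)"
  have fst_p: "fst p = (\<lambda>\<theta>. C * e \<theta> - C * cnj G * (f \<theta> * cis (2 * pi * of_int (- j) * \<theta>)))"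
    by (simp add: p_def pair_mult_def layer_def fun_eq_iff C_def G_def j_def e_def f_def cis_cnj)
      (simp add: algebra_simps)
  have snd_p: "snd p = (\<lambda>\<theta>. C * G * (e \<theta> * cis (2 * pi * of_int j * \<theta>)) + C * f \<theta>)"
    by (simp add: p_def pair_mult_def layer_def fun_eq_iff C_def G_def j_def e_def f_def mult_ac)
  have f_shift: "trig_poly (lo - j) (int m - j) (\<lambda>\<theta>. f \<theta> * cis (2 * pi * of_int (- j) * \<theta>))"
    using trig_poly_mult_cis[OF f, of "- j"] by simp
  have e_shift: "trig_poly (- int m + j) j (\<lambda>\<theta>. e \<theta> * cis (2 * pi * of_int j * \<theta>))"
    using trig_poly_mult_cis[OF e, of j] by simp
  show "trig_poly (- int (Suc m)) 0 (fst p)"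
    unfolding fst_p
    by (intro trig_poly_diff trig_poly_cmult trig_poly_mono[OF f_shift] trig_poly_mono[OF e])
      (use lo in \<open>auto simp: j_def\<close>)
  show "trig_poly lo (int (Suc m)) (snd p)"
    unfolding snd_p
    by (intro trig_poly_add trig_poly_cmult trig_poly_mono[OF e_shift] trig_poly_mono[OF f])
      (use lo in \<open>auto simp: j_def\<close>)
  have "circ_int (\<lambda>\<theta>. f \<theta> * cis (2 * pi * of_int (- j) * \<theta>)) = fourier_coeff f j"
    by (simp add: fourier_coeff_def)
  also have "\<dots> = 0"
    by (rule fourier_coeff_trig_poly[OF f]) (simp add: j_def)
  finally show "circ_int (fst p) = layer_const F (Suc m) * circ_int (fst q)"
    unfolding fst_p circ_int_def
    using continuous_on_trig_poly[OF e] continuous_on_trig_poly[OF f_shift]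
    by (simp add: C_def e_def continuous_imp_integrable_real)
qed

lemma nlft_partial_trig_poly:
  "trig_poly (- int k) 0 (fst (nlft_partial F k)) \<and> trig_poly 0 (int k) (snd (nlft_partial F k))"
proof (induction k)
  case 0
  show ?case
    using trig_poly_const by (simp add: layer_def)
next
  case (Suc k)
  then have "trig_poly (- int k) 0 (fst (nlft_partial F k))" "trig_poly 0 (int k) (snd (nlft_partial F k))"
    by blast+
  from trig_poly_pair_mult_layer(1,2)[OF this, where F = F] show ?case
    by simp
qed

lemma borel_measurable_nlft_partial [measurable]:
  "fst (nlft_partial F k) \<in> borel_measurable circ_meas"
  "snd (nlft_partial F k) \<in> borel_measurable circ_meas"
  using nlft_partial_trig_poly[of k F]
  by (auto intro: borel_measurable_circ_meas_continuous continuous_on_trig_poly)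

lemma unitary_pair_nlft_partial: "unitary_pair (nlft_partial F k)"
  by (induction k) (auto intro: unitary_pair_mult unitary_pair_layer)

definition layer_prod :: "(int \<Rightarrow> complex) \<Rightarrow> nat \<Rightarrow> real" where
  "layer_prod F k = (\<Prod>j\<le>k. layer_const F j)"

lemma layer_prod_pos: "layer_prod F k > 0"
  unfolding layer_prod_def by (rule prod_pos) (simp add: layer_const_pos)

lemma layer_prod_Suc: "layer_prod F (Suc k) = layer_prod F k * layer_const F (Suc k)"
  unfolding layer_prod_def by simp

lemma circ_int_fst_nlft_partial: "circ_int (fst (nlft_partial F k)) = layer_prod F k"
proof (induction k)
  case 0
  show ?case
    by (simp add: layer_def layer_prod_def circ_int_def)
next
  case (Suc k)
  have "trig_poly (- int k) 0 (fst (nlft_partial F k))" "trig_poly 0 (int k) (snd (nlft_partial F k))"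
    using nlft_partial_trig_poly by blast+
  from trig_poly_pair_mult_layer(3)[OF this, where F = F] show ?case
    using Suc.IH by (simp add: layer_prod_Suc mult.commute)
qed

lemma in_Hbar_nlft_partial: "in_Hbar (nlft_partial F k)"
proof -
  have a: "trig_poly (- int k) 0 (fst (nlft_partial F k))"
    and b: "trig_poly 0 (int k) (snd (nlft_partial F k))"
    using nlft_partial_trig_poly by blast+
  have "H2_Dstar (fst (nlft_partial F k))"
    unfolding H2_Dstar_def using H2_D_trig_poly[OF trig_poly_cnj[OF a]] by simp
  moreover have "H2_D (snd (nlft_partial F k))"
    using H2_D_trig_poly[OF b] by simp
  ultimately show ?thesis
    unfolding in_Hbar_def in_Lspace_def case_prod_beta at_infty_def circ_int_fst_nlft_partial
    using unitary_pair_D(3)[OF unitary_pair_nlft_partial] layer_prod_pos by auto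
qed

primrec nlft_tail :: "(int \<Rightarrow> complex) \<Rightarrow> nat \<Rightarrow> nat \<Rightarrow> circ_pair" where
  "nlft_tail F k 0 = (\<lambda>_. 1, \<lambda>_. 0)"
| "nlft_tail F k (Suc d) = pair_mult (nlft_tail F k d) (layer F (Suc (k + d)))"

lemma nlft_partial_add: "nlft_partial F (k + d) = pair_mult (nlft_partial F k) (nlft_tail F k d)"
  by (induction d) (simp_all add: pair_mult_one_right pair_mult_assoc)

lemma unitary_pair_nlft_tail: "unitary_pair (nlft_tail F k d)"
  by (induction d) (simp_all add: unitary_pair_mult unitary_pair_layer unitary_pair_def[of "(_, _)"])

lemma nlft_tail_trig_poly:
  "trig_poly (- int (k + d)) 0 (fst (nlft_tail F k d)) \<and> trig_poly 1 (int (k + d)) (snd (nlft_tail F k d))"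
proof (induction d)
  case 0
  show ?case
    using trig_poly_mono[OF trig_poly_const] by (simp add: trig_poly_zero)
next
  case (Suc d)
  then have "trig_poly (- int (k + d)) 0 (fst (nlft_tail F k d))"
    "trig_poly 1 (int (k + d)) (snd (nlft_tail F k d))"
    by blast+
  from trig_poly_pair_mult_layer(1,2)[OF this, where F = F] show ?case
    by simp
qed

lemma circ_int_fst_nlft_tail:
  "circ_int (fst (nlft_tail F k d)) = layer_prod F (k + d) / layer_prod F k"
proof (induction d)
  case 0
  show ?case
    using layer_prod_pos[of F k] by (simp add: circ_int_def)
next
  case (Suc d)
  have "trig_poly (- int (k + d)) 0 (fst (nlft_tail F k d))"
    "trig_poly 1 (int (k + d)) (snd (nlft_tail F k d))"
    using nlft_tail_trig_poly by blast+
  from trig_poly_pair_mult_layer(3)[OF this, where F = F] show ?case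
    using Suc.IH by (simp add: layer_prod_Suc)
qed

lemma integral_nlft_partial_dist_sq:
  "(LINT \<theta>|circ_meas. (cmod (fst (nlft_partial F (k + d)) \<theta> - fst (nlft_partial F k) \<theta>))\<^sup>2
      + (cmod (snd (nlft_partial F (k + d)) \<theta> - snd (nlft_partial F k) \<theta>))\<^sup>2)
   = 2 - 2 * layer_prod F (k + d) / layer_prod F k"
proof -
  let ?e = "fst (nlft_tail F k d)"
  have "(cmod (fst (nlft_partial F (k + d)) \<theta> - fst (nlft_partial F k) \<theta>))\<^sup>2
      + (cmod (snd (nlft_partial F (k + d)) \<theta> - snd (nlft_partial F k) \<theta>))\<^sup>2 = 2 - 2 * Re (?e \<theta>)"
    for \<theta>
    using cmod_pair_mult_diff_sq unitary_pair_nlft_partial[of F k] unitary_pair_nlft_tail[of F k d]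
    unfolding nlft_partial_add unitary_pair_def by (simp add: pair_mult_def)
  moreover have "integrable circ_meas ?e"
    using nlft_tail_trig_poly[of k d F]
    by (auto intro: continuous_imp_integrable_real continuous_on_trig_poly)
  ultimately show ?thesis
    using circ_int_fst_nlft_tail[of F k d] by (simp add: circ_int_def)
qed

definition nlft_vec :: "(int \<Rightarrow> complex) \<Rightarrow> nat \<Rightarrow> real \<Rightarrow> complex \<times> complex" where
  "nlft_vec F k \<theta> = (fst (nlft_partial F k) \<theta>, snd (nlft_partial F k) \<theta>)"

lemma fst_nlft_vec [simp]: "fst (nlft_vec F k \<theta>) = fst (nlft_partial F k) \<theta>"
  and snd_nlft_vec [simp]: "snd (nlft_vec F k \<theta>) = snd (nlft_partial F k) \<theta>"
  by (simp_all add: nlft_vec_def)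

lemma borel_measurable_nlft_vec: "nlft_vec F k \<in> borel_measurable circ_meas"
  unfolding nlft_vec_def by measurable

lemma norm_nlft_vec_le: "norm (nlft_vec F k \<theta>) \<le> 1"
  using unitary_pair_nlft_partial[of F k] by (simp add: nlft_vec_def norm_Pair unitary_pair_def)

section \<open>The infinite product of the layer constants\<close>

lemma summable_nat_of_summable_on_int:
  fixes f :: "int \<Rightarrow> real"
  assumes "f summable_on UNIV" "\<And>n. 0 \<le> f n"
  shows "summable (\<lambda>n. f (int n))"
proof -
  have "f summable_on range int"
    by (rule summable_on_subset_banach[OF assms(1)]) simp
  then have "(\<lambda>n. f (int n)) summable_on UNIV"
    using summable_on_reindex[of int UNIV f] by (simp add: o_def)
  then show ?thesis
    using assms(2) by (subst (asm) summable_on_UNIV_nonneg_real_iff) auto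
qed

lemma one_minus_inverse_sqrt_le:
  fixes x :: real
  assumes "0 \<le> x"
  shows "1 - 1 / sqrt (1 + x) \<le> x"
proof -
  have "sqrt (1 + x) \<le> 1 + x"
    using assms by (intro real_le_lsqrt) (auto simp: power2_eq_square)
  then have "1 / (1 + x) \<le> 1 / sqrt (1 + x)"
    using assms by (intro divide_left_mono) auto
  moreover have "1 - 1 / (1 + x) \<le> x"
    using assms by (simp add: field_simps)
  ultimately show ?thesis by linarith
qed

lemma convergent_prod_layer_const:
  assumes "summable (\<lambda>n. (cmod (F (int n)))\<^sup>2)"
  shows "convergent_prod (layer_const F)"
proof -
  have "\<bar>layer_const F n - 1\<bar> \<le> (cmod (F (int n)))\<^sup>2" for n
    using layer_const_le_1[of F n] one_minus_inverse_sqrt_le[of "(cmod (F (int n)))\<^sup>2"]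
    by (simp add: layer_const_def)
  then have "summable (\<lambda>n. \<bar>layer_const F n - 1\<bar>)"
    by (intro summable_comparison_test[OF _ assms]) auto
  moreover have "layer_const F n - 1 \<noteq> -1" for n
    using layer_const_pos[of F n] by simp
  ultimately have "convergent_prod (\<lambda>n. 1 + (layer_const F n - 1))"
    by (rule summable_imp_convergent_prod_real)
  then show ?thesis by simp
qed

lemma layer_prod_decseq: "decseq (layer_prod F)"
  by (rule decseq_SucI)
    (simp add: layer_prod_Suc layer_prod_pos layer_const_le_1 mult_le_cancel_left1)

context
  fixes F :: "int \<Rightarrow> complex"
  assumes summable_F: "summable (\<lambda>n. (cmod (F (int n)))\<^sup>2)"
begin

lemma layer_const_has_prod: "layer_const F has_prod prodinf (layer_const F)"
  using convergent_prod_layer_const[OF summable_F] convergent_prod_has_prod_iff by blast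

lemma layer_prod_LIMSEQ: "layer_prod F \<longlonglongrightarrow> prodinf (layer_const F)"
  unfolding layer_prod_def
  by (rule convergent_prod_LIMSEQ[OF convergent_prod_layer_const[OF summable_F]])

lemma prodinf_layer_const_le: "prodinf (layer_const F) \<le> layer_prod F k"
  by (rule decseq_ge[OF layer_prod_decseq layer_prod_LIMSEQ])

lemma prodinf_layer_const_pos: "prodinf (layer_const F) > 0"
proof -
  have "prodinf (layer_const F) \<noteq> 0"
    using layer_const_pos[of F]
    by (intro prodinf_nonzero[OF convergent_prod_layer_const[OF summable_F]]) (metis less_irrefl)
  moreover have "prodinf (layer_const F) \<ge> 0"
    by (rule LIMSEQ_le_const[OF layer_prod_LIMSEQ]) (auto intro: less_imp_le layer_prod_pos)
  ultimately show ?thesis by simp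
qed

lemma prodinf_div_layer_prod_LIMSEQ: "(\<lambda>k. prodinf (layer_const F) / layer_prod F k) \<longlonglongrightarrow> 1"
  using tendsto_divide[OF tendsto_const layer_prod_LIMSEQ, of "prodinf (layer_const F)"]
    prodinf_layer_const_pos by simp

lemma integral_nlft_vec_dist_sq_le:
  assumes "k \<le> i"
  shows "(LINT \<theta>|circ_meas. (norm (nlft_vec F k \<theta> - nlft_vec F i \<theta>))\<^sup>2)
    \<le> 2 - 2 * (prodinf (layer_const F) / layer_prod F k)"
proof -
  obtain d where i: "i = k + d"
    using le_Suc_ex[OF assms] by blast
  have "(norm (nlft_vec F k \<theta> - nlft_vec F i \<theta>))\<^sup>2
      = (cmod (fst (nlft_partial F (k + d)) \<theta> - fst (nlft_partial F k) \<theta>))\<^sup>2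
        + (cmod (snd (nlft_partial F (k + d)) \<theta> - snd (nlft_partial F k) \<theta>))\<^sup>2" for \<theta>
    by (simp add: i nlft_vec_def norm_Pair norm_minus_commute)
  then show ?thesis
    using prodinf_layer_const_le[of i] layer_prod_pos[of F k]
    by (simp add: i integral_nlft_partial_dist_sq divide_right_mono)
qed

end

section \<open>Almost everywhere limits of \<open>L\<^sup>2\<close>-Cauchy sequences\<close>

lemma le_half_plus_sq_div:
  fixes x e :: real
  assumes "0 < e"
  shows "x \<le> e / 2 + x\<^sup>2 / (2 * e)"
proof -
  have "0 \<le> (x - e)\<^sup>2" by simp
  then have "2 * e * x \<le> e\<^sup>2 + x\<^sup>2" by (simp add: power2_diff algebra_simps)
  then show ?thesis using assms by (simp add: field_simps power2_eq_square)
qed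

lemma (in finite_measure) integral_norm_diff_sq_le_AE_limit:
  fixes h :: "nat \<Rightarrow> 'a \<Rightarrow> 'b::{banach, second_countable_topology}"
  assumes [measurable]: "f \<in> borel_measurable M" "\<And>i. h i \<in> borel_measurable M"
    "L \<in> borel_measurable M"
    and bound: "\<And>x. norm (f x) \<le> K" "\<And>i x. norm (h i x) \<le> K"
    and lim: "AE x in M. (\<lambda>i. h i x) \<longlonglongrightarrow> L x"
    and le: "eventually (\<lambda>i. (\<integral>x. (norm (f x - h i x))\<^sup>2 \<partial>M) \<le> c) sequentially"
  shows "(\<integral>x. (norm (f x - L x))\<^sup>2 \<partial>M) \<le> c"
proof (rule tendsto_upperbound[OF _ le sequentially_bot])
  have "(norm (f x - h i x))\<^sup>2 \<le> (2 * K)\<^sup>2" for i x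
    using norm_triangle_ineq4[of "f x" "h i x"] bound(1)[of x] bound(2)[of i x] by (intro power_mono) auto
  then show "(\<lambda>i. \<integral>x. (norm (f x - h i x))\<^sup>2 \<partial>M) \<longlonglongrightarrow> (\<integral>x. (norm (f x - L x))\<^sup>2 \<partial>M)"
  proof (intro integral_dominated_convergence[where w = "\<lambda>_. (2 * K)\<^sup>2"])
    show "AE x in M. (\<lambda>i. (norm (f x - h i x))\<^sup>2) \<longlonglongrightarrow> (norm (f x - L x))\<^sup>2"
      using lim by eventually_elim (intro tendsto_intros)
  qed auto
qed

context prob_space
begin

lemma L1_Cauchy_if_L2_Cauchy:
  fixes g :: "nat \<Rightarrow> 'a \<Rightarrow> 'b::{banach, second_countable_topology}"
  assumes meas: "\<And>k. g k \<in> borel_measurable M" and bound: "\<And>k x. norm (g k x) \<le> K"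
    and "\<epsilon> \<longlonglongrightarrow> 0"
    and dist: "\<And>k i. k \<le> i \<Longrightarrow> (\<integral>x. (norm (g k x - g i x))\<^sup>2 \<partial>M) \<le> \<epsilon> k"
    and "e > 0"
  shows "\<exists>N. \<forall>i\<ge>N. \<forall>j\<ge>N. (\<integral>x. norm (g i x - g j x) \<partial>M) < e"
proof -
  obtain N where N: "\<And>k. k \<ge> N \<Longrightarrow> \<epsilon> k < e\<^sup>2"
    using order_tendstoD(2)[OF \<open>\<epsilon> \<longlonglongrightarrow> 0\<close>, of "e\<^sup>2"] \<open>e > 0\<close>
    by (auto simp: eventually_sequentially)
  have norm_diff_le: "norm (g i x - g j x) \<le> 2 * K" for i j x
    using norm_triangle_ineq4[of "g i x" "g j x"] bound[of i x] bound[of j x] by simp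
  have int_norm: "integrable M (\<lambda>x. norm (g i x - g j x))" for i j
    using norm_diff_le meas by (intro integrable_const_bound[where B = "2 * K"]) auto
  have int_sq: "integrable M (\<lambda>x. (norm (g i x - g j x))\<^sup>2)" for i j
  proof (rule integrable_const_bound[where B = "(2 * K)\<^sup>2"])
    show "AE x in M. norm ((norm (g i x - g j x))\<^sup>2) \<le> (2 * K)\<^sup>2"
      using power_mono[OF norm_diff_le[of i _ j] norm_ge_zero, of _ 2] by simp
  qed (use meas in auto)
  have "(\<integral>x. norm (g i x - g j x) \<partial>M) < e" if "i \<ge> N" "j \<ge> N" for i j
  proof -
    have "(\<integral>x. (norm (g i x - g j x))\<^sup>2 \<partial>M) \<le> \<epsilon> (min i j)"
      using dist[of i j] dist[of j i] by (cases "i \<le> j") (simp_all add: norm_minus_commute)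
    also have "\<dots> < e\<^sup>2"
      using N that by simp
    finally have sq_small: "(\<integral>x. (norm (g i x - g j x))\<^sup>2 \<partial>M) < e\<^sup>2" .
    have "(\<integral>x. norm (g i x - g j x) \<partial>M) \<le> (\<integral>x. e / 2 + (norm (g i x - g j x))\<^sup>2 / (2 * e) \<partial>M)"
      using int_norm int_sq le_half_plus_sq_div[OF \<open>e > 0\<close>] by (intro integral_mono) auto
    also have "\<dots> = e / 2 + (\<integral>x. (norm (g i x - g j x))\<^sup>2 \<partial>M) / (2 * e)"
      using int_sq by (simp add: prob_space)
    also have "\<dots> < e / 2 + e\<^sup>2 / (2 * e)"
      using sq_small \<open>e > 0\<close> by (simp add: divide_strict_right_mono)
    also have "\<dots> = e"
      using \<open>e > 0\<close> by (simp add: power2_eq_square)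
    finally show ?thesis .
  qed
  then show ?thesis by blast
qed

lemma L2_Cauchy_AE_subseq_limit:
  fixes g :: "nat \<Rightarrow> 'a \<Rightarrow> 'b::{banach, second_countable_topology}"
  assumes meas [measurable]: "\<And>k. g k \<in> borel_measurable M"
    and bound: "\<And>k x. norm (g k x) \<le> K"
    and "\<epsilon> \<longlonglongrightarrow> 0"
    and dist: "\<And>k i. k \<le> i \<Longrightarrow> (\<integral>x. (norm (g k x - g i x))\<^sup>2 \<partial>M) \<le> \<epsilon> k"
  obtains L r where "L \<in> borel_measurable M" "strict_mono r"
    "AE x in M. (\<lambda>i. g (r i) x) \<longlonglongrightarrow> L x" "\<And>x. norm (L x) \<le> K"
    "\<And>k. (\<integral>x. (norm (g k x - L x))\<^sup>2 \<partial>M) \<le> \<epsilon> k"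
proof -
  have "integrable M (g k)" for k
    using bound by (intro integrable_const_bound[where B = K]) auto
  from cauchy_L1_AE_cauchy_subseq[OF this L1_Cauchy_if_L2_Cauchy[OF meas bound assms(3,4)]]
  obtain r where r: "strict_mono r" "AE x in M. Cauchy (\<lambda>i. g (r i) x)"
    by blast
  define L where "L x = (if Cauchy (\<lambda>i. g (r i) x) then lim (\<lambda>i. g (r i) x) else 0)" for x
  have L_meas [measurable]: "L \<in> borel_measurable M"
    unfolding L_def by measurable
  have L_lim: "(\<lambda>i. g (r i) x) \<longlonglongrightarrow> L x" if "Cauchy (\<lambda>i. g (r i) x)" for x
    using that by (simp add: L_def Cauchy_convergent_iff convergent_LIMSEQ_iff)
  have L_AE: "AE x in M. (\<lambda>i. g (r i) x) \<longlonglongrightarrow> L x"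
    using r(2) by eventually_elim (rule L_lim)
  have "0 \<le> K"
    using bound[of 0] norm_ge_zero order_trans by blast
  have L_bound: "norm (L x) \<le> K" for x
  proof (cases "Cauchy (\<lambda>i. g (r i) x)")
    case True
    show ?thesis
      by (rule LIMSEQ_le_const2[OF tendsto_norm[OF L_lim[OF True]]]) (use bound in auto)
  qed (simp add: L_def \<open>0 \<le> K\<close>)
  have L2_bound: "(\<integral>x. (norm (g k x - L x))\<^sup>2 \<partial>M) \<le> \<epsilon> k" for k
  proof (rule integral_norm_diff_sq_le_AE_limit[OF _ _ L_meas bound bound L_AE])
    show "eventually (\<lambda>i. (\<integral>x. (norm (g k x - g (r i) x))\<^sup>2 \<partial>M) \<le> \<epsilon> k) sequentially"
      unfolding eventually_sequentially using dist order_trans[OF _ seq_suble[OF r(1)]] by blast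
  qed measurable
  show ?thesis
    using that L_meas r(1) L_AE L_bound L2_bound by blast
qed

end

lemma in_Hbar_AE_limit:
  assumes Hbar: "\<And>i. in_Hbar (p i)" and unitary: "\<And>i. unitary_pair (p i)"
    and a_meas: "a \<in> borel_measurable circ_meas" and b_meas: "b \<in> borel_measurable circ_meas"
    and a_le: "\<And>\<theta>. cmod (a \<theta>) \<le> 1" and b_le: "\<And>\<theta>. cmod (b \<theta>) \<le> 1"
    and lim_a: "AE \<theta> in circ_meas. (\<lambda>i. fst (p i) \<theta>) \<longlonglongrightarrow> a \<theta>"
    and lim_b: "AE \<theta> in circ_meas. (\<lambda>i. snd (p i) \<theta>) \<longlonglongrightarrow> b \<theta>"
    and a_infty: "at_infty a \<in> \<real>" "Re (at_infty a) > 0"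
  shows "in_Hbar (a, b)"
proof -
  note bounds = unitary_pair_D(1,2)[OF unitary]
  have H2_p: "H2_D (\<lambda>\<theta>. cnj (fst (p i) \<theta>))" "H2_D (snd (p i))" for i
    using Hbar[of i] by (cases "p i"; simp add: in_Hbar_def in_Lspace_def H2_Dstar_def)+
  have "AE \<theta> in circ_meas. a \<theta> * cnj (a \<theta>) + b \<theta> * cnj (b \<theta>) = 1"
    using lim_a lim_b
  proof eventually_elim
    case (elim \<theta>)
    then have "(\<lambda>i. (cmod (fst (p i) \<theta>))\<^sup>2 + (cmod (snd (p i) \<theta>))\<^sup>2) \<longlonglongrightarrow> (cmod (a \<theta>))\<^sup>2 + (cmod (b \<theta>))\<^sup>2"
      by (intro tendsto_intros)
    moreover have "(cmod (fst (p i) \<theta>))\<^sup>2 + (cmod (snd (p i) \<theta>))\<^sup>2 = 1" for i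
      using unitary[of i] unfolding unitary_pair_def by blast
    ultimately have "(\<lambda>i. 1) \<longlonglongrightarrow> (cmod (a \<theta>))\<^sup>2 + (cmod (b \<theta>))\<^sup>2"
      by simp
    then have "(cmod (a \<theta>))\<^sup>2 + (cmod (b \<theta>))\<^sup>2 = 1"
      by (simp add: LIMSEQ_const_iff)
    then show ?case
      by (rule complex_mult_cnj_add_eq_1)
  qed
  moreover have "H2_D (\<lambda>\<theta>. cnj (a \<theta>))"
  proof (rule H2_D_AE_limit[where h = "\<lambda>i \<theta>. cnj (fst (p i) \<theta>)" and K = 1])
    show "(\<lambda>\<theta>. cnj (a \<theta>)) \<in> borel_measurable circ_meas"
      by (intro borel_measurable_continuous_on[OF _ a_meas] continuous_intros)
    show "AE \<theta> in circ_meas. (\<lambda>i. cnj (fst (p i) \<theta>)) \<longlonglongrightarrow> cnj (a \<theta>)"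
      using lim_a by eventually_elim (rule tendsto_cnj)
  qed (simp_all only: H2_p complex_mod_cnj a_le bounds)
  moreover have "H2_D b"
    by (rule H2_D_AE_limit[where h = "\<lambda>i. snd (p i)" and K = 1])
      (simp_all only: H2_p b_meas b_le bounds lim_b)
  ultimately show ?thesis
    using a_infty a_meas b_meas unfolding in_Hbar_def in_Lspace_def H2_Dstar_def by simp
qed

lemma nlft_partial_AE_subseq_limit:
  assumes summable_F: "summable (\<lambda>n. (cmod (F (int n)))\<^sup>2)"
  defines "\<epsilon> \<equiv> \<lambda>k. 2 - 2 * (prodinf (layer_const F) / layer_prod F k)"
  obtains a b r where "a \<in> borel_measurable circ_meas" "b \<in> borel_measurable circ_meas"
    "\<And>\<theta>. cmod (a \<theta>) \<le> 1" "\<And>\<theta>. cmod (b \<theta>) \<le> 1" "strict_mono r"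
    "AE \<theta> in circ_meas. (\<lambda>i. fst (nlft_partial F (r i)) \<theta>) \<longlonglongrightarrow> a \<theta>"
    "AE \<theta> in circ_meas. (\<lambda>i. snd (nlft_partial F (r i)) \<theta>) \<longlonglongrightarrow> b \<theta>"
    "\<And>k. L2_norm (\<lambda>\<theta>. fst (nlft_partial F k) \<theta> - a \<theta>) \<le> sqrt (\<epsilon> k)"
    "\<And>k. L2_norm (\<lambda>\<theta>. snd (nlft_partial F k) \<theta> - b \<theta>) \<le> sqrt (\<epsilon> k)"
proof -
  have "\<epsilon> \<longlonglongrightarrow> 2 - 2 * 1"
    unfolding \<epsilon>_def by (intro tendsto_intros prodinf_div_layer_prod_LIMSEQ[OF summable_F])
  then have eps_lim: "\<epsilon> \<longlonglongrightarrow> 0"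
    by simp
  have "(LINT \<theta>|circ_meas. (norm (nlft_vec F k \<theta> - nlft_vec F i \<theta>))\<^sup>2) \<le> \<epsilon> k" if "k \<le> i" for k i
    using integral_nlft_vec_dist_sq_le[OF summable_F that] by (simp add: \<epsilon>_def)
  from prob_space.L2_Cauchy_AE_subseq_limit[OF prob_space_circ_meas borel_measurable_nlft_vec[of F]
      norm_nlft_vec_le[of F] eps_lim this]
  obtain L r where L_meas: "L \<in> borel_measurable circ_meas" and "strict_mono r"
    and L_AE: "AE \<theta> in circ_meas. (\<lambda>i. nlft_vec F (r i) \<theta>) \<longlonglongrightarrow> L \<theta>"
    and L_bound: "\<And>\<theta>. norm (L \<theta>) \<le> 1"
    and L2_bound: "\<And>k. (LINT \<theta>|circ_meas. (norm (nlft_vec F k \<theta> - L \<theta>))\<^sup>2) \<le> \<epsilon> k"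
    by blast
  show ?thesis
  proof (rule that[of "\<lambda>\<theta>. fst (L \<theta>)" "\<lambda>\<theta>. snd (L \<theta>)" r])
    show "(\<lambda>\<theta>. fst (L \<theta>)) \<in> borel_measurable circ_meas" "(\<lambda>\<theta>. snd (L \<theta>)) \<in> borel_measurable circ_meas"
      by (intro borel_measurable_continuous_on[OF _ L_meas] continuous_intros)+
    show "cmod (fst (L \<theta>)) \<le> 1" "cmod (snd (L \<theta>)) \<le> 1" for \<theta>
      using norm_fst_le[of "fst (L \<theta>)" "snd (L \<theta>)"] norm_snd_le[of "snd (L \<theta>)" "fst (L \<theta>)"] L_bound[of \<theta>]
      by simp_all
    show "AE \<theta> in circ_meas. (\<lambda>i. fst (nlft_partial F (r i)) \<theta>) \<longlonglongrightarrow> fst (L \<theta>)"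
      using L_AE by eventually_elim (drule tendsto_fst, simp)
    show "AE \<theta> in circ_meas. (\<lambda>i. snd (nlft_partial F (r i)) \<theta>) \<longlonglongrightarrow> snd (L \<theta>)"
      using L_AE by eventually_elim (drule tendsto_snd, simp)
    show "L2_norm (\<lambda>\<theta>. fst (nlft_partial F k) \<theta> - fst (L \<theta>)) \<le> sqrt (\<epsilon> k)"
      "L2_norm (\<lambda>\<theta>. snd (nlft_partial F k) \<theta> - snd (L \<theta>)) \<le> sqrt (\<epsilon> k)" for k
      using L2_norm_components_le[OF borel_measurable_nlft_vec L_meas norm_nlft_vec_le L_bound, of F k]
        real_sqrt_le_mono[OF L2_bound[of k]]
      unfolding fst_nlft_vec snd_nlft_vec by (meson order_trans)+
  qed fact
qed

lemma nlft_partial_limit: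
  assumes summable_F: "summable (\<lambda>n. (cmod (F (int n)))\<^sup>2)"
  defines "P \<equiv> prodinf (layer_const F)"
  obtains a b where "in_Hbar (a, b)" "at_infty a = P"
    "\<And>k. rho (nlft_partial F k) (a, b)
          \<le> 2 * sqrt (2 - 2 * (P / layer_prod F k)) + \<bar>ln (layer_prod F k) - ln P\<bar>"
proof -
  obtain a b r where a_meas: "a \<in> borel_measurable circ_meas" and b_meas: "b \<in> borel_measurable circ_meas"
    and a_le: "\<And>\<theta>. cmod (a \<theta>) \<le> 1" and b_le: "\<And>\<theta>. cmod (b \<theta>) \<le> 1" and "strict_mono r"
    and lim_a: "AE \<theta> in circ_meas. (\<lambda>i. fst (nlft_partial F (r i)) \<theta>) \<longlonglongrightarrow> a \<theta>"
    and lim_b: "AE \<theta> in circ_meas. (\<lambda>i. snd (nlft_partial F (r i)) \<theta>) \<longlonglongrightarrow> b \<theta>"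
    and L2_a: "\<And>k. L2_norm (\<lambda>\<theta>. fst (nlft_partial F k) \<theta> - a \<theta>) \<le> sqrt (2 - 2 * (P / layer_prod F k))"
    and L2_b: "\<And>k. L2_norm (\<lambda>\<theta>. snd (nlft_partial F k) \<theta> - b \<theta>) \<le> sqrt (2 - 2 * (P / layer_prod F k))"
    using nlft_partial_AE_subseq_limit[OF summable_F, folded P_def] by blast
  have "(\<lambda>i. fourier_coeff (fst (nlft_partial F (r i))) 0) \<longlonglongrightarrow> fourier_coeff a 0"
    using lim_a a_meas unitary_pair_D(1)[OF unitary_pair_nlft_partial]
    by (intro tendsto_fourier_coeff[where K = 1]) auto
  moreover have "(\<lambda>i. fourier_coeff (fst (nlft_partial F (r i))) 0) \<longlonglongrightarrow> complex_of_real P"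
    using LIMSEQ_subseq_LIMSEQ[OF layer_prod_LIMSEQ[OF summable_F] \<open>strict_mono r\<close>]
    unfolding fourier_coeff_0 circ_int_fst_nlft_partial P_def o_def by (intro tendsto_intros)
  ultimately have a_infty: "at_infty a = P"
    unfolding at_infty_def fourier_coeff_0[symmetric] using LIMSEQ_unique by blast
  have "P > 0"
    unfolding P_def by (rule prodinf_layer_const_pos[OF summable_F])
  have "in_Hbar (a, b)"
    using in_Hbar_nlft_partial unitary_pair_nlft_partial a_meas b_meas a_le b_le lim_a lim_b
    by (rule in_Hbar_AE_limit) (simp_all add: a_infty \<open>P > 0\<close>)
  moreover have "rho (nlft_partial F k) (a, b)
      \<le> 2 * sqrt (2 - 2 * (P / layer_prod F k)) + \<bar>ln (layer_prod F k) - ln P\<bar>" for k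
    using add_mono[OF L2_a[of k] L2_b[of k]] unfolding rho_def fst_conv snd_conv a_infty
    by (simp add: at_infty_def circ_int_fst_nlft_partial)
  ultimately show ?thesis
    using that a_infty by blast
qed

theorem theorem6p2:
  fixes F :: "int \<Rightarrow> complex"
  assumes "(\<lambda>n. (cmod (F n))\<^sup>2) summable_on UNIV"
    and "\<forall>n<0. F n = 0"
  shows "(\<forall>k. in_Lspace (nlft_partial F k)) \<and>
    (\<exists>a b. in_Hbar (a, b) \<and>
       (\<lambda>k. rho (nlft_partial F k) (a, b)) \<longlonglongrightarrow> 0 \<and>
       (\<lambda>n. 1 / sqrt (1 + (cmod (F (int n)))\<^sup>2)) has_prod Re (at_infty a))"
proof -
  have summable_F: "summable (\<lambda>n. (cmod (F (int n)))\<^sup>2)"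
    using summable_nat_of_summable_on_int[OF assms(1)] by simp
  define P where "P = prodinf (layer_const F)"
  obtain a b where Hbar: "in_Hbar (a, b)" and a_infty: "at_infty a = P"
    and rho_le: "\<And>k. rho (nlft_partial F k) (a, b)
                    \<le> 2 * sqrt (2 - 2 * (P / layer_prod F k)) + \<bar>ln (layer_prod F k) - ln P\<bar>"
    using nlft_partial_limit[OF summable_F, folded P_def] by blast
  have "(\<lambda>k. 2 * sqrt (2 - 2 * (P / layer_prod F k)) + \<bar>ln (layer_prod F k) - ln P\<bar>)
      \<longlonglongrightarrow> 2 * sqrt (2 - 2 * 1) + \<bar>ln P - ln P\<bar>"
    unfolding P_def using prodinf_layer_const_pos[OF summable_F]
    by (intro tendsto_intros prodinf_div_layer_prod_LIMSEQ layer_prod_LIMSEQ summable_F) auto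
  then have bound_lim: "(\<lambda>k. 2 * sqrt (2 - 2 * (P / layer_prod F k)) + \<bar>ln (layer_prod F k) - ln P\<bar>)
      \<longlonglongrightarrow> 0"
    by simp
  have "(\<lambda>k. rho (nlft_partial F k) (a, b)) \<longlonglongrightarrow> 0"
    using rho_le by (intro tendsto_sandwich[OF _ _ tendsto_const bound_lim] always_eventually allI)
      (auto simp: rho_def L2_norm_def)
  moreover have "layer_const F = (\<lambda>n. 1 / sqrt (1 + (cmod (F (int n)))\<^sup>2))"
    by (simp add: fun_eq_iff layer_const_def)
  then have "(\<lambda>n. 1 / sqrt (1 + (cmod (F (int n)))\<^sup>2)) has_prod Re (at_infty a)"
    using layer_const_has_prod[OF summable_F] by (simp add: a_infty P_def)
  ultimately show ?thesis
    using in_Hbar_nlft_partial Hbar unfolding in_Hbar_def by (intro conjI allI exI) auto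
qed

end
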